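(* For $2\le k\le n$, let $\mathcal{A}^{1\prec n}_{k\mapsto n}$ be the set of permutations $\sigma$ of $\{1,\dots,n\}$ avoiding $1423$ and $2413$ such that entry $1$ appears to the left of entry $n$ and $\sigma(k)=n$, and let $a_{n,k}=\lvert\mathcal{A}^{1\prec n}_{k\mapsto n}\rvert$. Then \begin{align*} a_{n,2}&=1,\\ a_{n,n}&=a_{n,n-1}+a_{n-1,n-1}\quad\text{for } n\ge3,\\ a_{n,k}&=a_{n,k-1}+a_{n-1,k}+a_{n-1,k-1}\quad\text{for }3\le k<n. \end{align*}
   Context: A permutation avoids a pattern $p$ if no subsequence of its one-line notation is order-isomorphic to $p$. *)

theory Defs
  imports Main
begin

definition perms_of :: "nat \<Rightarrow> nat list set" where
  "perms_of n = {xs. distinct xs \<and> set xs = {1..n}}"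

definition contains_pattern :: "nat list \<Rightarrow> nat list \<Rightarrow> bool" where
  "contains_pattern xs p \<longleftrightarrow>
     (\<exists>f :: nat \<Rightarrow> nat. strict_mono_on {..<length p} f \<and>
        (\<forall>a<length p. f a < length xs) \<and>
        (\<forall>a<length p. \<forall>b<length p. xs ! f a < xs ! f b \<longleftrightarrow> p ! a < p ! b))"

definition avoids :: "nat list \<Rightarrow> nat list \<Rightarrow> bool" where
  "avoids xs p \<longleftrightarrow> \<not> contains_pattern xs p"

text \<open>Positions are 1-based as in the paper: sigma(k) = xs ! (k - 1).
  "1 appears left of n": index of 1 < index of n.\<close>
definition A_set :: "nat \<Rightarrow> nat \<Rightarrow> nat list set" where
  "A_set n k = {xs \<in> perms_of n. avoids xs [1,4,2,3] \<and> avoids xs [2,4,1,3] \<and>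
       (\<exists>i j. i < j \<and> j < length xs \<and> xs ! i = 1 \<and> xs ! j = n) \<and>
       xs ! (k - 1) = n}"

definition a_num :: "nat \<Rightarrow> nat \<Rightarrow> nat" where
  "a_num n k = card (A_set n k)"

end

theory Submission
  imports Defs
begin

text \<open>
  Let \<open>\<sigma>\<close> avoid 1423 and 2413, with 1 left of \<open>n = \<sigma>(k)\<close>. An occurrence of either pattern is
  a subsequence \<open>a b c d\<close> with \<open>a, c < d < b\<close>. Hence the entries after \<open>n\<close> decrease, and a value
  missing from the prefix \<open>P\<close> before \<open>n\<close> can follow \<open>n\<close> only if \<open>P\<close> does not straddle it, i.e.
  contains no \<open>a, b, c\<close> in this order with \<open>a, c < g < b\<close>. So \<open>\<sigma>\<close> is determined by \<open>P\<close>, and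
  \<open>a(n, k) = F(n - 1, k - 1)\<close>, where \<open>F(N, m)\<close> counts such admissible words of length \<open>m\<close>
  over \<open>{1..N}\<close> containing 1.

  An admissible word misses \<open>N\<close>, or has 1 before \<open>N\<close>, or \<open>N\<close> before 1; let \<open>H(N, m)\<close> and
  \<open>G(N, m)\<close> count the last two kinds. The last entry of a word of the second kind is \<open>N\<close> or the
  largest missing value, so \<open>H(N, m) = F(N - 1, m - 1) + H(N, m - 1)\<close>. In a word of the third kind,
  if \<open>y\<close> is the least entry up to \<open>N\<close>, the values \<open>y..N\<close> form an initial block, so
  \<open>G(N, m) = \<Sum>\<^sub>t b(t) F(N - t, m - t)\<close>, where \<open>b(t)\<close> counts the possible blocks. Expanding each
  summand with the recurrence for \<open>F\<close> at smaller \<open>N\<close> shows, by induction on \<open>N\<close>, that \<open>G\<close>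
  obeys the same recursion in \<open>m\<close> as \<open>H\<close>. Thus \<open>G = H\<close>, and the three-way split yields
  \<open>F(N, m) = F(N, m - 1) + F(N - 1, m) + F(N - 1, m - 1)\<close>.
\<close>

definition precedes :: "'a list \<Rightarrow> 'a \<Rightarrow> 'a \<Rightarrow> bool" where
  "precedes xs x y \<longleftrightarrow> (\<exists>i j. i < j \<and> j < length xs \<and> xs ! i = x \<and> xs ! j = y)"

lemma precedes_imp_mem: "precedes xs x y \<Longrightarrow> x \<in> set xs \<and> y \<in> set xs"
  unfolding precedes_def by auto

lemma precedes_total:
  assumes "x \<in> set xs" "y \<in> set xs" "x \<noteq> y"
  shows "precedes xs x y \<or> precedes xs y x"
proof -
  obtain i j where ij: "i < length xs" "xs ! i = x" "j < length xs" "xs ! j = y"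
    using assms(1,2) by (auto simp: in_set_conv_nth)
  with assms(3) consider "i < j" | "j < i" by (metis linorder_neqE_nat)
  then show ?thesis unfolding precedes_def using ij by cases blast+
qed

lemma distinct_precedes_asym:
  assumes "distinct xs" "precedes xs x y"
  shows "\<not> precedes xs y x"
  using assms unfolding precedes_def by (metis nth_eq_iff_index_eq order.strict_trans not_less_iff_gr_or_eq)

lemma precedes_append_mem:
  assumes "x \<in> set xs" "y \<in> set ys"
  shows "precedes (xs @ ys) x y"
proof -
  obtain i j where "i < length xs" "xs ! i = x" "j < length ys" "ys ! j = y"
    using assms by (auto simp: in_set_conv_nth)
  then show ?thesis unfolding precedes_def
    by (intro exI[of _ i] exI[of _ "length xs + j"]) (simp add: nth_append)
qed

lemma precedes_snoc_iff: "precedes (xs @ [z]) x y \<longleftrightarrow> precedes xs x y \<or> (x \<in> set xs \<and> y = z)"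
proof
  assume "precedes (xs @ [z]) x y"
  then obtain i j where ij: "i < j" "j < Suc (length xs)" "(xs @ [z]) ! i = x" "(xs @ [z]) ! j = y"
    unfolding precedes_def by auto
  show "precedes xs x y \<or> (x \<in> set xs \<and> y = z)"
  proof (cases "j = length xs")
    case True
    then show ?thesis using ij by (auto simp: nth_append)
  next
    case False
    then have "j < length xs" using ij by simp
    then have "xs ! i = x" "xs ! j = y" using ij by (simp_all add: nth_append)
    then show ?thesis using ij \<open>j < length xs\<close> unfolding precedes_def by blast
  qed
next
  assume "precedes xs x y \<or> (x \<in> set xs \<and> y = z)"
  then show "precedes (xs @ [z]) x y"
  proof
    assume "precedes xs x y"
    then obtain i j where "i < j" "j < length xs" "xs ! i = x" "xs ! j = y"
      unfolding precedes_def by blast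
    then show ?thesis unfolding precedes_def
      by (intro exI[of _ i] exI[of _ j]) (simp add: nth_append)
  qed (simp add: precedes_append_mem)
qed

lemma precedes_map: "precedes xs x y \<Longrightarrow> precedes (map f xs) (f x) (f y)"
  unfolding precedes_def by (metis length_map nth_map order.strict_trans)

lemma distinct_precedes_appendD:
  assumes "distinct (xs @ ys)" "precedes (xs @ ys) x y" "y \<in> set xs"
  shows "x \<in> set xs"
proof -
  obtain i j where ij: "i < j" "j < length (xs @ ys)" "(xs @ ys) ! i = x" "(xs @ ys) ! j = y"
    using assms(2) unfolding precedes_def by blast
  have "j < length xs"
  proof (rule ccontr)
    assume "\<not> j < length xs"
    then have "y \<in> set ys" using ij by (auto simp: nth_append)
    then show False using assms(1,3) by auto
  qed
  then show ?thesis using ij by (auto simp: nth_append)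
qed

lemma Min_prefix_takeWhile:
  fixes P :: "nat list"
  assumes "j < length P"
  defines "y \<equiv> Min (set (take (Suc j) P))"
  shows "y \<in> set (take (Suc j) P)" "P ! j \<in> set (takeWhile (\<lambda>x. y \<le> x) P)"
    "y = P ! j \<or> precedes (takeWhile (\<lambda>x. y \<le> x) P) y (P ! j)"
proof -
  show y: "y \<in> set (take (Suc j) P)"
    unfolding y_def using assms(1) by (intro Min_in) (auto simp: take_Suc_conv_app_nth)
  then obtain a where "a < length (take (Suc j) P)" "take (Suc j) P ! a = y"
    unfolding in_set_conv_nth by blast
  then have a: "a \<le> j" "P ! a = y"
    by auto
  have "y \<le> P ! i" if "i < Suc j" for i
    unfolding y_def using that assms(1) by (intro Min_le) (auto simp: in_set_conv_nth)
  then have "Suc j \<le> length (takeWhile (\<lambda>x. y \<le> x) P)"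
    using assms(1) by (intro length_takeWhile_less_P_nth) auto
  then have j: "j < length (takeWhile (\<lambda>x. y \<le> x) P)"
    and nth_a: "takeWhile (\<lambda>x. y \<le> x) P ! a = y"
    and nth_j: "takeWhile (\<lambda>x. y \<le> x) P ! j = P ! j"
    using a by (simp_all add: takeWhile_nth)
  then show "P ! j \<in> set (takeWhile (\<lambda>x. y \<le> x) P)"
    by (metis nth_mem)
  show "y = P ! j \<or> precedes (takeWhile (\<lambda>x. y \<le> x) P) y (P ! j)"
  proof (cases "a = j")
    case False
    then have "a < j"
      using a(1) by simp
    then show ?thesis
      using j nth_a nth_j unfolding precedes_def by blast
  qed (use a in simp)
qed

section \<open>Avoiding 1423 and 2413\<close>

(* Appending g to xs creates an occurrence of 1423 or 2413 that ends with g. *)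
definition straddles :: "nat list \<Rightarrow> nat \<Rightarrow> bool" where
  "straddles xs g \<longleftrightarrow>
     (\<exists>i j l. i < j \<and> j < l \<and> l < length xs \<and> xs ! i < g \<and> xs ! l < g \<and> g < xs ! j)"

definition avoids_1423_2413 :: "nat list \<Rightarrow> bool" where
  "avoids_1423_2413 xs \<longleftrightarrow> (\<forall>q < length xs. \<not> straddles (take q xs) (xs ! q))"

lemma not_avoids_1423_2413_iff:
  "\<not> avoids_1423_2413 xs \<longleftrightarrow> (\<exists>i j l q. i < j \<and> j < l \<and> l < q \<and> q < length xs \<and>
     xs ! i < xs ! q \<and> xs ! l < xs ! q \<and> xs ! q < xs ! j)"
proof
  assume "\<not> avoids_1423_2413 xs"
  then obtain q i j l where "q < length xs" "i < j" "j < l" "l < length (take q xs)"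
    "take q xs ! i < xs ! q" "take q xs ! l < xs ! q" "xs ! q < take q xs ! j"
    unfolding avoids_1423_2413_def straddles_def by blast
  then show "\<exists>i j l q. i < j \<and> j < l \<and> l < q \<and> q < length xs \<and>
     xs ! i < xs ! q \<and> xs ! l < xs ! q \<and> xs ! q < xs ! j"
    by (intro exI[of _ i] exI[of _ j] exI[of _ l] exI[of _ q]) simp
next
  assume "\<exists>i j l q. i < j \<and> j < l \<and> l < q \<and> q < length xs \<and>
     xs ! i < xs ! q \<and> xs ! l < xs ! q \<and> xs ! q < xs ! j"
  then obtain i j l q where ijlq: "i < j" "j < l" "l < q" "q < length xs"
    "xs ! i < xs ! q" "xs ! l < xs ! q" "xs ! q < xs ! j"
    by blast
  then have "straddles (take q xs) (xs ! q)"
    unfolding straddles_def by (intro exI[of _ i] exI[of _ j] exI[of _ l]) simp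
  then show "\<not> avoids_1423_2413 xs"
    unfolding avoids_1423_2413_def using ijlq(4) by blast
qed

lemma contains_1423_or_2413_imp_not_avoids:
  assumes "contains_pattern xs p" "p = [1,4,2,3] \<or> p = [2,4,1,3]"
  shows "\<not> avoids_1423_2413 xs"
proof -
  have "length p = 4"
    using assms(2) by auto
  then obtain f where mono: "strict_mono_on {..<4} f" and bound: "\<forall>a<4. f a < length xs"
    and order: "\<forall>a<4. \<forall>b<4. xs ! f a < xs ! f b \<longleftrightarrow> p ! a < p ! b"
    using assms(1) unfolding contains_pattern_def by metis
  have "f 0 < f 1" "f 1 < f 2" "f 2 < f 3"
    using mono by (auto simp: strict_mono_on_def)
  moreover have "f 3 < length xs"
    using bound by simp
  moreover have "xs ! f 0 < xs ! f 3" "xs ! f 2 < xs ! f 3" "xs ! f 3 < xs ! f 1"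
    using order[rule_format, of 0 3] order[rule_format, of 2 3] order[rule_format, of 3 1] assms(2)
    by auto
  ultimately show ?thesis
    unfolding not_avoids_1423_2413_iff by blast
qed

lemma not_avoids_imp_contains_1423_or_2413:
  assumes "distinct xs" "\<not> avoids_1423_2413 xs"
  shows "contains_pattern xs [1,4,2,3] \<or> contains_pattern xs [2,4,1,3]"
proof -
  obtain i j l q where ijlq: "i < j" "j < l" "l < q" "q < length xs"
    "xs ! i < xs ! q" "xs ! l < xs ! q" "xs ! q < xs ! j"
    using assms(2) unfolding not_avoids_1423_2413_iff by blast
  define f where "f = (!) [i, j, l, q]"
  have mono: "strict_mono_on {..<4} f" and bound: "\<forall>a<4. f a < length xs"
    unfolding strict_mono_on_def f_def using ijlq by (auto simp: less_Suc_eq numeral_eq_Suc)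
  have "xs ! i \<noteq> xs ! l"
    using assms(1) ijlq by (simp add: nth_eq_iff_index_eq)
  then consider "xs ! i < xs ! l" | "xs ! l < xs ! i"
    by linarith
  then show ?thesis
  proof cases
    case 1
    then have "\<forall>a<4. \<forall>b<4. xs ! f a < xs ! f b \<longleftrightarrow> [1::nat,4,2,3] ! a < [1,4,2,3] ! b"
      unfolding f_def using ijlq by (auto simp: less_Suc_eq numeral_eq_Suc)
    then show ?thesis
      unfolding contains_pattern_def using mono bound by (simp add: numeral_eq_Suc) blast
  next
    case 2
    then have "\<forall>a<4. \<forall>b<4. xs ! f a < xs ! f b \<longleftrightarrow> [2::nat,4,1,3] ! a < [2,4,1,3] ! b"
      unfolding f_def using ijlq by (auto simp: less_Suc_eq numeral_eq_Suc)
    then show ?thesis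
      unfolding contains_pattern_def using mono bound by (simp add: numeral_eq_Suc) blast
  qed
qed

lemma avoids_1423_and_2413_iff:
  "distinct xs \<Longrightarrow> avoids xs [1,4,2,3] \<and> avoids xs [2,4,1,3] \<longleftrightarrow> avoids_1423_2413 xs"
  using contains_1423_or_2413_imp_not_avoids not_avoids_imp_contains_1423_or_2413
  unfolding avoids_def by blast

lemma straddles_appendI1: "straddles xs g \<Longrightarrow> straddles (xs @ ys) g"
proof -
  assume "straddles xs g"
  then obtain i j l where "i < j" "j < l" "l < length xs" "xs ! i < g" "xs ! l < g" "g < xs ! j"
    unfolding straddles_def by blast
  then show ?thesis
    unfolding straddles_def by (intro exI[of _ i] exI[of _ j] exI[of _ l]) (simp add: nth_append)
qed

lemma straddles_appendI2: "straddles ys g \<Longrightarrow> straddles (xs @ ys) g"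
proof -
  assume "straddles ys g"
  then obtain i j l where "i < j" "j < l" "l < length ys" "ys ! i < g" "ys ! l < g" "g < ys ! j"
    unfolding straddles_def by blast
  then show ?thesis
    unfolding straddles_def
    by (intro exI[of _ "length xs + i"] exI[of _ "length xs + j"] exI[of _ "length xs + l"])
      (simp add: nth_append)
qed

lemma straddles_append_precedes:
  assumes "precedes xs a b" "c \<in> set ys" "a < g" "c < g" "g < b"
  shows "straddles (xs @ ys) g"
proof -
  obtain i j where "i < j" "j < length xs" "xs ! i = a" "xs ! j = b"
    using assms(1) unfolding precedes_def by blast
  moreover obtain l where "l < length ys" "ys ! l = c"
    using assms(2) by (auto simp: in_set_conv_nth)
  ultimately show ?thesis
    unfolding straddles_def using assms(3-5)
    by (intro exI[of _ i] exI[of _ j] exI[of _ "length xs + l"]) (simp add: nth_append)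
qed

lemma straddles_append_leftD:
  assumes "straddles (xs @ ys) g" "\<forall>y \<in> set ys. g \<le> y"
  shows "straddles xs g"
proof -
  obtain i j l where ijl: "i < j" "j < l" "l < length (xs @ ys)"
    "(xs @ ys) ! i < g" "(xs @ ys) ! l < g" "g < (xs @ ys) ! j"
    using assms(1) unfolding straddles_def by blast
  have "l < length xs"
  proof (rule ccontr)
    assume "\<not> l < length xs"
    then have "(xs @ ys) ! l \<in> set ys"
      using ijl(3) by (simp add: nth_append)
    then show False
      using assms(2) ijl(5) by fastforce
  qed
  then show ?thesis
    unfolding straddles_def using ijl
    by (intro exI[of _ i] exI[of _ j] exI[of _ l]) (simp add: nth_append)
qed

lemma straddles_append_rightD:
  assumes "straddles (xs @ ys) g" "\<forall>x \<in> set xs. g \<le> x"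
  shows "straddles ys g"
proof -
  obtain i j l where ijl: "i < j" "j < l" "l < length (xs @ ys)"
    "(xs @ ys) ! i < g" "(xs @ ys) ! l < g" "g < (xs @ ys) ! j"
    using assms(1) unfolding straddles_def by blast
  have "length xs \<le> i"
  proof (rule ccontr)
    assume "\<not> length xs \<le> i"
    then have "(xs @ ys) ! i \<in> set xs"
      by (simp add: nth_append)
    then show False
      using assms(2) ijl(4) by fastforce
  qed
  then have "i - length xs < j - length xs" "j - length xs < l - length xs"
    "l - length xs < length ys" "ys ! (i - length xs) < g" "ys ! (l - length xs) < g"
    "g < ys ! (j - length xs)"
    using ijl by (simp_all add: nth_append)
  then show ?thesis
    unfolding straddles_def by blast
qed

lemma not_straddles_if_above:
  assumes "\<forall>x \<in> set xs. x \<le> g"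
  shows "\<not> straddles xs g"
proof
  assume "straddles xs g"
  then obtain j where "j < length xs" "g < xs ! j"
    unfolding straddles_def by (meson order.strict_trans)
  then show False
    using assms nth_mem leD by blast
qed

lemma straddles_map:
  assumes "strict_mono_on S f" "set xs \<subseteq> S" "g \<in> S"
  shows "straddles (map f xs) (f g) \<longleftrightarrow> straddles xs g"
proof -
  have less: "f (xs ! i) < f g \<longleftrightarrow> xs ! i < g" "f g < f (xs ! i) \<longleftrightarrow> g < xs ! i"
    if "i < length xs" for i
    using that assms strict_mono_on_less[OF assms(1)] by (auto intro: nth_mem)
  show ?thesis
  proof
    assume "straddles (map f xs) (f g)"
    then obtain i j l where ijl: "i < j" "j < l" "l < length xs"
      "f (xs ! i) < f g" "f (xs ! l) < f g" "f g < f (xs ! j)"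
      unfolding straddles_def by auto
    then show "straddles xs g"
      unfolding straddles_def using less[of i] less[of j] less[of l] by auto
  next
    assume "straddles xs g"
    then obtain i j l where ijl: "i < j" "j < l" "l < length xs"
      "xs ! i < g" "xs ! l < g" "g < xs ! j"
      unfolding straddles_def by auto
    then show "straddles (map f xs) (f g)"
      unfolding straddles_def using less[of i] less[of j] less[of l]
      by (intro exI[of _ i] exI[of _ j] exI[of _ l]) simp
  qed
qed

lemma avoids_1423_2413_append_iff:
  "avoids_1423_2413 (xs @ ys) \<longleftrightarrow>
     avoids_1423_2413 xs \<and> (\<forall>q < length ys. \<not> straddles (xs @ take q ys) (ys ! q))"
proof -
  have split: "(\<forall>q < length xs + length ys. P q) \<longleftrightarrow>
      (\<forall>q < length xs. P q) \<and> (\<forall>q < length ys. P (length xs + q))" for P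
  proof -
    have "q < length xs \<or> (\<exists>q' < length ys. q = length xs + q')"
      if "q < length xs + length ys" for q
    proof (cases "q < length xs")
      case False
      then show ?thesis
        using that by (intro disjI2 exI[of _ "q - length xs"]) simp
    qed simp
    then show ?thesis
      by auto
  qed
  show ?thesis
    unfolding avoids_1423_2413_def length_append split by (simp add: nth_append)
qed

lemma avoids_1423_2413_snoc_iff:
  "avoids_1423_2413 (xs @ [y]) \<longleftrightarrow> avoids_1423_2413 xs \<and> \<not> straddles xs y"
  by (simp add: avoids_1423_2413_append_iff)

lemma avoids_1423_2413_appendD:
  assumes "avoids_1423_2413 (xs @ ys)"
  shows "avoids_1423_2413 xs" "avoids_1423_2413 ys"
  using assms straddles_appendI2 unfolding avoids_1423_2413_append_iff
  by (auto simp: avoids_1423_2413_def)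

lemma avoids_1423_2413_append_not_straddles:
  assumes "avoids_1423_2413 (xs @ ys)" "g \<in> set ys"
  shows "\<not> straddles xs g"
proof
  assume "straddles xs g"
  obtain q where "q < length ys" "ys ! q = g"
    using assms(2) by (auto simp: in_set_conv_nth)
  then show False
    using assms(1) straddles_appendI1[OF \<open>straddles xs g\<close>]
    unfolding avoids_1423_2413_append_iff by blast
qed

lemma avoids_1423_2413_append_blocks:
  assumes "avoids_1423_2413 xs" "avoids_1423_2413 ys" "\<forall>x \<in> set xs. \<forall>y \<in> set ys. y < x"
  shows "avoids_1423_2413 (xs @ ys)"
proof -
  have "\<not> straddles (xs @ take q ys) (ys ! q)" if "q < length ys" for q
  proof
    assume "straddles (xs @ take q ys) (ys ! q)"
    moreover have "\<forall>x \<in> set xs. ys ! q \<le> x"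
      using assms(3) that by (auto intro: less_imp_le nth_mem)
    ultimately have "straddles (take q ys) (ys ! q)"
      by (rule straddles_append_rightD)
    then show False
      using assms(2) that unfolding avoids_1423_2413_def by blast
  qed
  then show ?thesis
    using assms(1) unfolding avoids_1423_2413_append_iff by blast
qed

lemma avoids_1423_2413_append_decreasing:
  assumes "avoids_1423_2413 xs" "sorted_wrt (>) ys" "\<forall>y \<in> set ys. \<not> straddles xs y"
  shows "avoids_1423_2413 (xs @ ys)"
proof -
  have "\<not> straddles (xs @ take q ys) (ys ! q)" if "q < length ys" for q
  proof
    assume "straddles (xs @ take q ys) (ys ! q)"
    moreover have "\<forall>y \<in> set (take q ys). ys ! q \<le> y"
      using assms(2) that by (auto simp: in_set_conv_nth sorted_wrt_iff_nth_less less_imp_le)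
    ultimately have "straddles xs (ys ! q)"
      by (rule straddles_append_leftD)
    then show False
      using assms(3) that by (auto intro: nth_mem)
  qed
  then show ?thesis
    using assms(1) unfolding avoids_1423_2413_append_iff by blast
qed

lemma avoids_1423_2413_map:
  assumes "strict_mono_on (set xs) f"
  shows "avoids_1423_2413 (map f xs) \<longleftrightarrow> avoids_1423_2413 xs"
proof -
  have "straddles (take q (map f xs)) (map f xs ! q) \<longleftrightarrow> straddles (take q xs) (xs ! q)"
    if "q < length xs" for q
    using straddles_map[OF assms, of "take q xs" "xs ! q"] that
    by (simp add: take_map set_take_subset)
  then show ?thesis
    unfolding avoids_1423_2413_def by simp
qed

lemma avoids_1423_2413_append_sorted:
  assumes "avoids_1423_2413 (xs @ ys)" "precedes xs a b" "\<forall>y \<in> set ys. a < y \<and> y < b"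
    "distinct ys"
  shows "sorted_wrt (>) ys"
  unfolding sorted_wrt_iff_nth_less
proof (intro allI impI)
  fix p q assume pq: "p < q" "q < length ys"
  show "ys ! q < ys ! p"
  proof (rule ccontr)
    assume "\<not> ys ! q < ys ! p"
    moreover have "ys ! q \<noteq> ys ! p"
      using assms(4) pq by (simp add: nth_eq_iff_index_eq)
    ultimately have "ys ! p < ys ! q"
      by simp
    moreover have "ys ! p \<in> set (take q ys)"
      using pq by (auto simp: in_set_conv_nth)
    moreover have "a < ys ! q" "ys ! q < b"
      using assms(3) pq(2) by auto
    ultimately have "straddles (xs @ take q ys) (ys ! q)"
      using straddles_append_precedes[OF assms(2)] by blast
    moreover have "ys ! q \<in> set (drop q ys)"
      using pq(2) by (simp add: in_set_conv_nth exI[of _ 0])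
    ultimately show False
      using avoids_1423_2413_append_not_straddles[of "xs @ take q ys" "drop q ys"] assms(1)
      by simp
  qed
qed

lemma avoids_1423_2413_no_value_between:
  assumes "avoids_1423_2413 (A @ b # B)" "precedes A y z" "b < y" "x \<in> set B" "y < x"
  shows "z \<le> x"
proof (rule ccontr)
  assume "\<not> z \<le> x"
  then have "straddles (A @ [b]) x"
    using straddles_append_precedes[OF assms(2), of b "[b]" x] assms(3,5) by simp
  then show False
    using avoids_1423_2413_append_not_straddles[of "A @ [b]" B x] assms(1,4) by simp
qed

lemma avoids_1423_2413_dropWhile_below:
  assumes "avoids_1423_2413 P" "distinct P" "\<forall>x \<in> set P. x \<le> z"
    "z \<in> set (takeWhile (\<lambda>x. y \<le> x) P)" "y = z \<or> precedes (takeWhile (\<lambda>x. y \<le> x) P) y z"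
  shows "\<forall>x \<in> set (dropWhile (\<lambda>x. y \<le> x) P). x < y"
proof (rule ccontr)
  define A B where "A = takeWhile (\<lambda>x. y \<le> x) P" and "B = dropWhile (\<lambda>x. y \<le> x) P"
  have P_eq: "P = A @ B"
    unfolding A_def B_def by simp
  assume "\<not> (\<forall>x \<in> set (dropWhile (\<lambda>x. y \<le> x) P). x < y)"
  then obtain x where x: "x \<in> set B" "y \<le> x"
    unfolding B_def by auto
  then obtain b B' where B_eq: "B = b # B'"
    by (cases B) auto
  have "b < y"
    using hd_dropWhile[of "\<lambda>x. y \<le> x" P] B_eq unfolding B_def by simp
  then have "x \<in> set B'"
    using x B_eq by auto
  have "x \<notin> set A"
    using assms(2) x(1) unfolding P_eq by auto
  moreover have "z \<in> set A"
    using assms(4) unfolding A_def .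
  ultimately have "x \<noteq> z"
    by auto
  moreover have "x \<le> z"
    using assms(3) x(1) unfolding P_eq by simp
  ultimately have "x < z"
    by simp
  then have "y \<noteq> z"
    using x(2) by auto
  then have "precedes A y z"
    using assms(5) unfolding A_def by simp
  moreover have "y \<noteq> x"
    using \<open>x \<notin> set A\<close> precedes_imp_mem[OF \<open>precedes A y z\<close>] by auto
  ultimately have "z \<le> x"
    using assms(1) \<open>b < y\<close> \<open>x \<in> set B'\<close> x(2) unfolding P_eq B_eq
    by (intro avoids_1423_2413_no_value_between[of A b B' y z x]) auto
  then show False
    using \<open>x < z\<close> by simp
qed

lemma avoids_1423_2413_split_at_max_iff:
  assumes "distinct (P @ n # D)" "\<forall>x \<in> set (P @ D). a \<le> x \<and> x < n" "a \<in> set P"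
  shows "avoids_1423_2413 (P @ n # D) \<longleftrightarrow>
    avoids_1423_2413 P \<and> sorted_wrt (>) D \<and> (\<forall>g \<in> set D. \<not> straddles P g)"
proof
  assume avoids: "avoids_1423_2413 (P @ n # D)"
  then show "avoids_1423_2413 P \<and> sorted_wrt (>) D \<and> (\<forall>g \<in> set D. \<not> straddles P g)"
  proof (intro conjI ballI notI)
    show "avoids_1423_2413 P"
      using avoids avoids_1423_2413_appendD(1) by blast
    show "sorted_wrt (>) D"
    proof (rule avoids_1423_2413_append_sorted)
      show "avoids_1423_2413 ((P @ [n]) @ D)" "distinct D"
        using avoids assms(1) by simp_all
      show "precedes (P @ [n]) a n"
        using assms(3) by (simp add: precedes_snoc_iff)
      show "\<forall>y \<in> set D. a < y \<and> y < n"
        using assms by (fastforce simp: le_less)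
    qed
    fix g assume "g \<in> set D" "straddles P g"
    then show False
      using avoids_1423_2413_append_not_straddles[of "P @ [n]" D g] straddles_appendI1 avoids
      by simp
  qed
next
  assume H: "avoids_1423_2413 P \<and> sorted_wrt (>) D \<and> (\<forall>g \<in> set D. \<not> straddles P g)"
  have "\<forall>x \<in> set P. x \<le> n"
    using assms(2) by (simp add: less_imp_le)
  then have "\<not> straddles P n"
    by (rule not_straddles_if_above)
  then have "avoids_1423_2413 (P @ [n])"
    using H by (simp add: avoids_1423_2413_snoc_iff)
  moreover have "\<not> straddles (P @ [n]) y" if "y \<in> set D" for y
  proof -
    have "y < n" "\<not> straddles P y"
      using that H assms(2) by simp_all
    then show ?thesis
      using straddles_append_leftD[of P "[n]" y] by auto
  qed
  ultimately have "avoids_1423_2413 ((P @ [n]) @ D)"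
    using H by (blast intro: avoids_1423_2413_append_decreasing)
  then show "avoids_1423_2413 (P @ n # D)"
    by simp
qed

section \<open>Admissible prefixes\<close>

(* The prefixes to the left of the maximum (A_set_decomp, A_set_compose): the values missing from
   the prefix come after the maximum, so the prefix must not straddle any of them. *)
definition adm :: "nat \<Rightarrow> nat \<Rightarrow> nat list set" where
  "adm N m = {P. length P = m \<and> distinct P \<and> set P \<subseteq> {1..N} \<and> 1 \<in> set P \<and>
     avoids_1423_2413 P \<and> (\<forall>g \<in> {1..N} - set P. \<not> straddles P g)}"

lemma admI:
  assumes "length P = m" "distinct P" "set P \<subseteq> {1..N}" "1 \<in> set P" "avoids_1423_2413 P"
    "\<And>g. g \<in> {1..N} - set P \<Longrightarrow> \<not> straddles P g"
  shows "P \<in> adm N m"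
  using assms unfolding adm_def by blast

definition descending_complement :: "nat \<Rightarrow> nat list \<Rightarrow> nat list" where
  "descending_complement N P = rev (sorted_list_of_set ({1..N} - set P))"

lemma descending_complement:
  "sorted_wrt (>) (descending_complement N P)"
  "set (descending_complement N P) = {1..N} - set P"
  "distinct (descending_complement N P)"
  unfolding descending_complement_def by (auto simp: sorted_wrt_rev strict_sorted_list_of_set)

lemma descending_complement_unique:
  assumes "sorted_wrt (>) D" "set D = {1..N} - set P"
  shows "D = descending_complement N P"
proof -
  have "rev D = sorted_list_of_set ({1..N} - set P)"
    using assms by (intro strict_sorted_equal) (simp_all add: sorted_wrt_rev strict_sorted_list_of_set)
  then show ?thesis
    unfolding descending_complement_def by (metis rev_rev_ident)
qed

lemma mem_A_set_iff:
  "xs \<in> A_set n k \<longleftrightarrow> distinct xs \<and> set xs = {1..n} \<and> avoids_1423_2413 xs \<and>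
     precedes xs 1 n \<and> xs ! (k - 1) = n"
proof (cases "distinct xs")
  case True
  then have "avoids xs [1,4,2,3] \<and> avoids xs [2,4,1,3] \<longleftrightarrow> avoids_1423_2413 xs"
    by (rule avoids_1423_and_2413_iff)
  then show ?thesis
    unfolding A_set_def perms_of_def precedes_def mem_Collect_eq by blast
next
  case False
  then show ?thesis
    unfolding A_set_def perms_of_def by simp
qed

lemma A_set_split_at_max:
  assumes "xs \<in> A_set n k" "1 \<le> k" "k \<le> n"
  obtains P D where "xs = P @ n # D" "length P = k - 1" "distinct (P @ n # D)"
    "set (P @ D) = {1..n - 1}" "1 \<in> set P"
proof -
  define P D where "P = take (k - 1) xs" and "D = drop k xs"
  have distinct: "distinct xs" and set_xs: "set xs = {1..n}"
    and one_n: "precedes xs 1 n" and at_k: "xs ! (k - 1) = n"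
    using assms(1) unfolding mem_A_set_iff by auto
  have "length xs = n"
    using distinct_card[OF distinct] set_xs by simp
  then have xs_eq: "xs = P @ n # D" and "length P = k - 1"
    unfolding P_def D_def using id_take_nth_drop[of "k - 1" xs] assms(2,3) at_k
    by (simp_all add: Suc_diff_le)
  moreover have "distinct (P @ n # D)"
    using distinct xs_eq by simp
  moreover have "set (P @ D) = {1..n - 1}"
  proof -
    have "set (P @ D) = set xs - {n}"
      using distinct xs_eq by auto
    moreover have "{1..n} - {n} = {1..n - 1}"
      by (auto simp: le_diff_conv2)
    ultimately show ?thesis
      using set_xs by simp
  qed
  moreover have "1 \<in> set P"
  proof -
    have "1 \<noteq> n"
      using distinct_precedes_asym[OF distinct one_n] one_n by auto
    then show ?thesis
      using distinct_precedes_appendD[of "P @ [n]" D 1 n] distinct one_n xs_eq by auto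
  qed
  ultimately show thesis
    by (rule that)
qed

lemma A_set_decomp:
  assumes "xs \<in> A_set n k" "1 \<le> k" "k \<le> n"
  obtains P where "P \<in> adm (n - 1) (k - 1)" "xs = P @ n # descending_complement (n - 1) P"
proof -
  obtain P D where xs_eq: "xs = P @ n # D" and "length P = k - 1" and dist: "distinct (P @ n # D)"
    and below_n: "set (P @ D) = {1..n - 1}" and one_P: "1 \<in> set P"
    using A_set_split_at_max[OF assms] .
  have "\<forall>x \<in> set (P @ D). 1 \<le> x \<and> x < n"
    unfolding below_n by auto
  moreover have "avoids_1423_2413 (P @ n # D)"
    using assms(1) xs_eq unfolding mem_A_set_iff by simp
  ultimately have "avoids_1423_2413 P" "sorted_wrt (>) D" "\<forall>g \<in> set D. \<not> straddles P g"
    using avoids_1423_2413_split_at_max_iff[OF dist _ one_P] by simp_all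
  have set_D: "set D = {1..n - 1} - set P"
  proof -
    have "set D = set (P @ D) - set P"
      using dist by auto
    then show ?thesis
      unfolding below_n .
  qed
  have "D = descending_complement (n - 1) P"
    using \<open>sorted_wrt (>) D\<close> set_D by (rule descending_complement_unique)
  moreover have "P \<in> adm (n - 1) (k - 1)"
  proof (rule admI)
    show "distinct P"
      using dist by simp
    show "set P \<subseteq> {1..n - 1}"
      unfolding below_n[symmetric] by simp
    show "\<And>g. g \<in> {1..n - 1} - set P \<Longrightarrow> \<not> straddles P g"
      using set_D \<open>\<forall>g \<in> set D. \<not> straddles P g\<close> by blast
  qed fact+
  ultimately show thesis
    using that xs_eq by simp
qed

lemma A_set_compose:
  assumes "P \<in> adm (n - 1) (k - 1)" "1 \<le> k" "k \<le> n"
  shows "P @ n # descending_complement (n - 1) P \<in> A_set n k"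
proof -
  define D where "D = descending_complement (n - 1) P"
  have length_P: "length P = k - 1" and dist_P: "distinct P" and set_P: "set P \<subseteq> {1..n - 1}"
    and one_P: "1 \<in> set P" and avoids_P: "avoids_1423_2413 P"
    and gaps: "\<forall>g \<in> {1..n - 1} - set P. \<not> straddles P g"
    using assms(1) unfolding adm_def by auto
  have D: "sorted_wrt (>) D" "set D = {1..n - 1} - set P" "distinct D"
    unfolding D_def by (fact descending_complement)+
  have "2 \<le> n"
    using set_P one_P by auto
  then have "set (P @ D) = {1..n - 1}" "insert n {1..n - 1} = {1..n}"
    using set_P D(2) by auto
  moreover have "distinct (P @ n # D)"
    using dist_P D set_P \<open>2 \<le> n\<close> by (auto simp: subset_iff)
  moreover have "avoids_1423_2413 (P @ n # D)"
  proof -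
    have "\<forall>x \<in> set (P @ D). 1 \<le> x \<and> x < n"
      unfolding \<open>set (P @ D) = {1..n - 1}\<close> by auto
    moreover have "\<forall>g \<in> set D. \<not> straddles P g"
      using gaps D(2) by simp
    ultimately show ?thesis
      using avoids_1423_2413_split_at_max_iff[OF \<open>distinct (P @ n # D)\<close> _ one_P] avoids_P D(1)
      by simp
  qed
  moreover have "precedes (P @ n # D) 1 n"
    using one_P by (simp add: precedes_append_mem)
  moreover have "(P @ n # D) ! (k - 1) = n"
    using length_P by (simp add: nth_append)
  ultimately show ?thesis
    unfolding mem_A_set_iff D_def[symmetric] by simp
qed

lemma a_num_eq_card_adm:
  assumes "1 \<le> k" "k \<le> n"
  shows "a_num n k = card (adm (n - 1) (k - 1))"
proof -
  have "A_set n k = (\<lambda>P. P @ n # descending_complement (n - 1) P) ` adm (n - 1) (k - 1)"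
    using A_set_decomp[OF _ assms] A_set_compose[OF _ assms] by blast
  moreover have "inj_on (\<lambda>P. P @ n # descending_complement (n - 1) P) (adm (n - 1) (k - 1))"
    by (rule inj_onI) (simp add: adm_def append_eq_append_conv)
  ultimately show ?thesis
    unfolding a_num_def by (simp add: card_image)
qed

lemma finite_adm: "finite (adm N m)"
proof (rule finite_subset)
  show "adm N m \<subseteq> {P. set P \<subseteq> {1..N} \<and> length P = m}"
    unfolding adm_def by auto
  show "finite {P. set P \<subseteq> {1..N} \<and> length P = m}"
    by (rule finite_lists_length_eq) simp
qed

lemma adm_eq_empty:
  assumes "N < m"
  shows "adm N m = {}"
proof -
  have "m \<le> N" if "P \<in> adm N m" for P
  proof -
    have "card (set P) = m" "set P \<subseteq> {1..N}"
      using that unfolding adm_def by (auto simp: distinct_card)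
    then show ?thesis
      using card_mono[of "{1..N}" "set P"] by simp
  qed
  then show ?thesis
    using assms by fastforce
qed

lemma adm_one:
  assumes "1 \<le> N"
  shows "adm N 1 = {[1]}"
proof (intro equalityI subsetI)
  fix P assume "P \<in> adm N 1"
  then have "length P = 1" "1 \<in> set P"
    unfolding adm_def by auto
  then show "P \<in> {[1]}"
    by (cases P) auto
next
  fix P :: "nat list" assume "P \<in> {[1]}"
  moreover have "avoids_1423_2413 [1]" "\<not> straddles [1] g" for g
    unfolding avoids_1423_2413_def straddles_def by auto
  ultimately show "P \<in> adm N 1"
    using assms unfolding adm_def by auto
qed

lemma adm_full:
  assumes "T \<in> adm t t"
  shows "set T = {1..t}"
proof -
  have "set T \<subseteq> {1..t}" "card (set T) = t"
    using assms unfolding adm_def by (auto simp: distinct_card)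
  then show ?thesis
    using card_subset_eq[of "{1..t}" "set T"] by simp
qed

lemma adm_eq_adm_Suc_not_mem: "adm N m = {P \<in> adm (Suc N) m. Suc N \<notin> set P}"
proof (intro equalityI subsetI CollectI conjI)
  fix P assume "P \<in> adm N m"
  then have P: "length P = m" "distinct P" "set P \<subseteq> {1..N}" "1 \<in> set P" "avoids_1423_2413 P"
    and gaps: "\<And>g. g \<in> {1..N} - set P \<Longrightarrow> \<not> straddles P g"
    unfolding adm_def by auto
  have "\<not> straddles P (Suc N)"
    by (rule not_straddles_if_above) (use P(3) in auto)
  then have "\<not> straddles P g" if "g \<in> {1..Suc N} - set P" for g
    using gaps that by (cases "g = Suc N") auto
  moreover have "Suc N \<notin> set P"
    using P(3) by auto
  ultimately show "P \<in> adm (Suc N) m" "Suc N \<notin> set P"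
    using P unfolding adm_def by auto
next
  fix P assume "P \<in> {P \<in> adm (Suc N) m. Suc N \<notin> set P}"
  then show "P \<in> adm N m"
    unfolding adm_def by (auto simp: subset_iff le_Suc_eq)
qed

lemma adm_snoc:
  assumes "Q \<in> adm N m" "w \<in> {1..N} - set Q" "\<forall>g \<in> {1..N} - set Q. g \<le> w"
  shows "Q @ [w] \<in> adm N (Suc m)"
proof -
  have Q: "length Q = m" "distinct Q" "set Q \<subseteq> {1..N}" "1 \<in> set Q" "avoids_1423_2413 Q"
    and gaps: "\<And>g. g \<in> {1..N} - set Q \<Longrightarrow> \<not> straddles Q g"
    using assms(1) unfolding adm_def by auto
  have "avoids_1423_2413 (Q @ [w])"
    using Q(5) gaps assms(2) by (simp add: avoids_1423_2413_snoc_iff)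
  moreover have "\<not> straddles (Q @ [w]) g" if "g \<in> {1..N} - set (Q @ [w])" for g
    using gaps[of g] straddles_append_leftD[of Q "[w]" g] assms(3) that by auto
  ultimately show ?thesis
    using Q assms(2) unfolding adm_def by auto
qed

lemma adm_butlast:
  assumes "Q @ [w] \<in> adm N (Suc m)" "1 \<in> set Q"
  shows "Q \<in> adm N m"
proof -
  have P: "length Q = m" "distinct (Q @ [w])" "set (Q @ [w]) \<subseteq> {1..N}"
    "avoids_1423_2413 (Q @ [w])"
    and gaps: "\<And>g. g \<in> {1..N} - set (Q @ [w]) \<Longrightarrow> \<not> straddles (Q @ [w]) g"
    using assms(1) unfolding adm_def by auto
  have "\<not> straddles Q g" if "g \<in> {1..N} - set Q" for g
  proof (cases "g = w")
    case True
    then show ?thesis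
      using P(4) by (simp add: avoids_1423_2413_snoc_iff)
  next
    case False
    then show ?thesis
      using gaps[of g] that straddles_appendI1[of Q g "[w]"] by auto
  qed
  moreover have "avoids_1423_2413 Q"
    using P(4) by (simp add: avoids_1423_2413_snoc_iff)
  ultimately show ?thesis
    using P assms(2) unfolding adm_def by auto
qed

section \<open>Splitting by the relative order of 1 and N\<close>

definition adm_1N :: "nat \<Rightarrow> nat \<Rightarrow> nat list set" where
  "adm_1N N m = {P \<in> adm N m. precedes P 1 N}"

definition adm_N1 :: "nat \<Rightarrow> nat \<Rightarrow> nat list set" where
  "adm_N1 N m = {P \<in> adm N m. precedes P N 1}"

lemma card_adm_split:
  assumes "2 \<le> N"
  shows "card (adm N m) = card (adm (N - 1) m) + card (adm_1N N m) + card (adm_N1 N m)"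
proof -
  have adm_pred: "adm (N - 1) m = {P \<in> adm N m. N \<notin> set P}"
    using adm_eq_adm_Suc_not_mem[of "N - 1" m] assms by simp
  have "adm N m \<subseteq> adm (N - 1) m \<union> adm_1N N m \<union> adm_N1 N m"
  proof
    fix P assume P: "P \<in> adm N m"
    show "P \<in> adm (N - 1) m \<union> adm_1N N m \<union> adm_N1 N m"
    proof (cases "N \<in> set P")
      case True
      moreover have "1 \<in> set P"
        using P unfolding adm_def by simp
      ultimately have "precedes P 1 N \<or> precedes P N 1"
        using precedes_total[of 1 P N] assms by simp
      then show ?thesis
        using P unfolding adm_1N_def adm_N1_def by blast
    qed (use P adm_pred in blast)
  qed
  moreover have "adm (N - 1) m \<union> adm_1N N m \<union> adm_N1 N m \<subseteq> adm N m"
    unfolding adm_pred adm_1N_def adm_N1_def by blast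
  ultimately have "adm N m = adm (N - 1) m \<union> adm_1N N m \<union> adm_N1 N m"
    by (rule equalityI)
  moreover have "adm (N - 1) m \<inter> adm_1N N m = {}"
    unfolding adm_pred adm_1N_def by (auto dest: precedes_imp_mem)
  moreover have "(adm (N - 1) m \<union> adm_1N N m) \<inter> adm_N1 N m = {}"
  proof (rule equals0I)
    fix P assume "P \<in> (adm (N - 1) m \<union> adm_1N N m) \<inter> adm_N1 N m"
    then have "P \<in> adm N m" "precedes P N 1" "N \<notin> set P \<or> precedes P 1 N"
      unfolding adm_pred adm_1N_def adm_N1_def by auto
    moreover from this(1) have "distinct P"
      unfolding adm_def by simp
    ultimately show False
      using distinct_precedes_asym[of P N 1] precedes_imp_mem[of P N 1] by blast
  qed
  moreover have "finite (adm_1N N m)" "finite (adm_N1 N m)"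
    using finite_adm unfolding adm_1N_def adm_N1_def by simp_all
  ultimately show ?thesis
    using finite_adm by (simp add: card_Un_disjoint)
qed

lemma adm_1N_last_eq:
  assumes "2 \<le> N"
  shows "{P \<in> adm_1N N (Suc m). last P = N} = (\<lambda>Q. Q @ [N]) ` adm (N - 1) m"
proof (intro equalityI subsetI)
  fix P assume "P \<in> {P \<in> adm_1N N (Suc m). last P = N}"
  then have P: "P \<in> adm N (Suc m)" "precedes P 1 N" "last P = N"
    unfolding adm_1N_def by auto
  then have "P \<noteq> []"
    unfolding adm_def by auto
  then obtain Q where P_eq: "P = Q @ [N]"
    using P(3) by (metis append_butlast_last_id)
  have "1 \<in> set Q"
    using P(2) unfolding P_eq precedes_snoc_iff by (auto dest: precedes_imp_mem)
  then have "Q \<in> adm N m"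
    using P(1) unfolding P_eq by (intro adm_butlast[of Q N])
  moreover have "N \<notin> set Q"
    using P(1) unfolding P_eq adm_def by simp
  ultimately have "Q \<in> adm (N - 1) m"
    using adm_eq_adm_Suc_not_mem[of "N - 1" m] assms by simp
  then show "P \<in> (\<lambda>Q. Q @ [N]) ` adm (N - 1) m"
    unfolding P_eq by (rule imageI)
next
  fix P assume "P \<in> (\<lambda>Q. Q @ [N]) ` adm (N - 1) m"
  then obtain Q where Q: "Q \<in> adm (N - 1) m" and P_eq: "P = Q @ [N]"
    by blast
  have "Q \<in> adm N m" "N \<notin> set Q"
    using Q adm_eq_adm_Suc_not_mem[of "N - 1" m] assms by simp_all
  moreover have "N \<in> {1..N}"
    using assms by simp
  ultimately have "P \<in> adm N (Suc m)"
    unfolding P_eq by (intro adm_snoc) auto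
  moreover have "precedes P 1 N"
    using Q unfolding P_eq adm_def by (simp add: precedes_snoc_iff)
  ultimately show "P \<in> {P \<in> adm_1N N (Suc m). last P = N}"
    unfolding adm_1N_def P_eq by simp
qed

lemma adm_snoc_eq_Max_gap:
  assumes "Q @ [w] \<in> adm N (Suc m)" "precedes Q 1 N"
  shows "w = Max ({1..N} - set Q)"
proof (rule Max_eqI[symmetric])
  show w: "w \<in> {1..N} - set Q"
    using assms(1) unfolding adm_def by auto
  fix g assume g: "g \<in> {1..N} - set Q"
  show "g \<le> w"
  proof (rule ccontr)
    assume "\<not> g \<le> w"
    moreover have "g \<noteq> N"
      using g precedes_imp_mem[OF assms(2)] by auto
    ultimately have "straddles (Q @ [w]) g"
      using g w by (intro straddles_append_precedes[OF assms(2), of w]) auto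
    moreover have "g \<in> {1..N} - set (Q @ [w])"
      using g \<open>\<not> g \<le> w\<close> by auto
    ultimately show False
      using assms(1) unfolding adm_def by blast
  qed
qed simp

lemma adm_gaps_nonempty:
  assumes "Q \<in> adm N m" "m < N"
  shows "{1..N} - set Q \<noteq> {}"
proof
  assume "{1..N} - set Q = {}"
  then have "card {1..N} \<le> card (set Q)"
    by (intro card_mono) auto
  moreover have "card (set Q) = m"
    using assms(1) unfolding adm_def by (simp add: distinct_card)
  ultimately show False
    using assms(2) by simp
qed

lemma adm_1N_last_neq:
  assumes "m < N"
  shows "{P \<in> adm_1N N (Suc m). last P \<noteq> N} =
    (\<lambda>Q. Q @ [Max ({1..N} - set Q)]) ` adm_1N N m"
proof (intro equalityI subsetI)
  fix P assume "P \<in> {P \<in> adm_1N N (Suc m). last P \<noteq> N}"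
  then have P: "P \<in> adm N (Suc m)" "precedes P 1 N" "last P \<noteq> N"
    unfolding adm_1N_def by auto
  then have "P \<noteq> []"
    unfolding adm_def by auto
  then obtain Q w where P_eq: "P = Q @ [w]"
    by (metis append_butlast_last_id)
  then have one_N: "precedes Q 1 N"
    using P(2,3) by (simp add: precedes_snoc_iff)
  then have "Q \<in> adm N m"
    using P(1) precedes_imp_mem[OF one_N] unfolding P_eq by (intro adm_butlast[of Q w]) auto
  moreover have "w = Max ({1..N} - set Q)"
    using P(1) one_N unfolding P_eq by (rule adm_snoc_eq_Max_gap)
  ultimately show "P \<in> (\<lambda>Q. Q @ [Max ({1..N} - set Q)]) ` adm_1N N m"
    using one_N unfolding P_eq adm_1N_def by (intro image_eqI[where x = Q]) simp_all
next
  fix P assume "P \<in> (\<lambda>Q. Q @ [Max ({1..N} - set Q)]) ` adm_1N N m"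
  then obtain Q where Q: "Q \<in> adm N m" "precedes Q 1 N"
    and P_eq: "P = Q @ [Max ({1..N} - set Q)]"
    unfolding adm_1N_def by blast
  have max: "Max ({1..N} - set Q) \<in> {1..N} - set Q"
    using adm_gaps_nonempty[OF Q(1) assms] by (intro Max_in) auto
  then have "P \<in> adm N (Suc m)"
    unfolding P_eq using Q(1) by (intro adm_snoc) auto
  moreover have "last P \<noteq> N"
    using max precedes_imp_mem[OF Q(2)] unfolding P_eq by auto
  ultimately show "P \<in> {P \<in> adm_1N N (Suc m). last P \<noteq> N}"
    using Q(2) unfolding adm_1N_def P_eq by (simp add: precedes_snoc_iff)
qed

lemma card_adm_1N_Suc:
  assumes "2 \<le> N" "m < N"
  shows "card (adm_1N N (Suc m)) = card (adm (N - 1) m) + card (adm_1N N m)"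
proof -
  let ?A = "adm_1N N (Suc m)"
  have "finite ?A"
    using finite_adm unfolding adm_1N_def by simp
  then have "card ?A = card {P \<in> ?A. last P = N} + card {P \<in> ?A. last P \<noteq> N}"
    by (subst card_Un_disjoint[symmetric]) (auto intro: arg_cong[where f = card])
  moreover have "inj_on (\<lambda>Q. Q @ [f Q]) B" for f :: "nat list \<Rightarrow> nat" and B
    by (rule inj_onI) simp
  ultimately show ?thesis
    unfolding adm_1N_last_eq[OF assms(1)] adm_1N_last_neq[OF assms(2)] by (simp add: card_image)
qed

(* The initial blocks of the words in adm_N1, shifted down to {1..t} (adm_N1_decomp). *)
definition blocks :: "nat \<Rightarrow> nat list set" where
  "blocks t = {T \<in> adm t t. \<not> precedes T t 1}"

lemma adm_stack:
  assumes "T \<in> adm t t" "R \<in> adm c k"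
  shows "map (\<lambda>x. x + c) T @ R \<in> adm (t + c) (t + k)"
proof -
  define S where "S = map (\<lambda>x. x + c) T"
  have T: "length T = t" "distinct T" "avoids_1423_2413 T"
    using assms(1) unfolding adm_def by simp_all
  have R: "length R = k" "distinct R" "set R \<subseteq> {1..c}" "1 \<in> set R" "avoids_1423_2413 R"
    and gaps: "\<And>g. g \<in> {1..c} - set R \<Longrightarrow> \<not> straddles R g"
    using assms(2) unfolding adm_def by auto
  have set_S: "set S = {c + 1..t + c}"
    unfolding S_def using adm_full[OF assms(1)] by (simp add: add.commute)
  have S_above_R: "\<forall>x \<in> set S. \<forall>y \<in> set R. y < x"
    using set_S R(3) by fastforce
  show ?thesis
    unfolding S_def[symmetric]
  proof (rule admI)
    show "length (S @ R) = t + k"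
      unfolding S_def using T(1) R(1) by simp
    have "distinct S"
      unfolding S_def using T(2) by (simp add: distinct_map inj_on_def)
    moreover have "set S \<inter> set R = {}"
      using S_above_R by fastforce
    ultimately show "distinct (S @ R)"
      using R(2) by simp
    show "set (S @ R) \<subseteq> {1..t + c}"
      using set_S R(3) by auto
    show "1 \<in> set (S @ R)"
      using R(4) by simp
    show "avoids_1423_2413 (S @ R)"
    proof (rule avoids_1423_2413_append_blocks)
      show "avoids_1423_2413 S"
        unfolding S_def using T(3) by (subst avoids_1423_2413_map) (auto simp: strict_mono_on_def)
    qed (use R(5) S_above_R in auto)
    fix g assume g: "g \<in> {1..t + c} - set (S @ R)"
    then have "g \<in> {1..c} - set R"
      using set_S by auto
    show "\<not> straddles (S @ R) g"
    proof
      assume "straddles (S @ R) g"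
      moreover have "\<forall>x \<in> set S. g \<le> x"
        using set_S \<open>g \<in> {1..c} - set R\<close> by auto
      ultimately have "straddles R g"
        by (rule straddles_append_rightD)
      then show False
        using gaps \<open>g \<in> {1..c} - set R\<close> by blast
    qed
  qed
qed

lemma adm_N1_compose:
  assumes "t \<in> {1..m - 1}" "T \<in> blocks t" "R \<in> adm (N - t) (m - t)"
  shows "map (\<lambda>x. x + (N - t)) T @ R \<in> adm_N1 N m"
proof -
  have T: "T \<in> adm t t"
    using assms(2) unfolding blocks_def by simp
  have "1 \<in> set R" "set R \<subseteq> {1..N - t}"
    using assms(3) unfolding adm_def by simp_all
  then have "t + (N - t) = N" "t + (m - t) = m"
    using assms(1) by auto
  moreover have "map (\<lambda>x. x + (N - t)) T @ R \<in> adm (t + (N - t)) (t + (m - t))"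
    using T assms(3) by (rule adm_stack)
  moreover have "t + (N - t) \<in> set (map (\<lambda>x. x + (N - t)) T)"
    using adm_full[OF T] assms(1) by simp
  then have "precedes (map (\<lambda>x. x + (N - t)) T @ R) (t + (N - t)) 1"
    using \<open>1 \<in> set R\<close> by (rule precedes_append_mem)
  ultimately show ?thesis
    unfolding adm_N1_def by simp
qed

lemma adm_top_block:
  assumes "A @ B \<in> adm N m" "set A = {y..N}" "y \<le> N"
  shows "map (\<lambda>x. x - (y - 1)) A \<in> adm (length A) (length A)"
proof -
  define c where "c = y - 1"
  define T where "T = map (\<lambda>x. x - c) A"
  have A: "distinct A" "avoids_1423_2413 A" "1 \<le> y"
    using assms avoids_1423_2413_appendD(1) unfolding adm_def by fastforce+
  have mono: "strict_mono_on (set A) (\<lambda>x. x - c)"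
    using assms(2) unfolding c_def by (auto simp: strict_mono_on_def)
  have "distinct T"
    unfolding T_def using A(1) strict_mono_on_imp_inj_on[OF mono] by (simp add: distinct_map)
  moreover have "set T \<subseteq> {1..length A}"
    unfolding T_def using assms(2,3) A(3) distinct_card[OF A(1)] by (auto simp: c_def)
  ultimately have set_T: "set T = {1..length A}"
    using card_subset_eq[of "{1..length A}" "set T"] distinct_card[of T]
    by (simp add: T_def)
  moreover have "avoids_1423_2413 T"
    unfolding T_def using A(2) avoids_1423_2413_map[OF mono] by simp
  moreover have "1 \<in> set T"
    using set_T assms(2,3) by (cases A) auto
  ultimately show ?thesis
    using \<open>distinct T\<close> unfolding T_def c_def by (intro admI) simp_all
qed

lemma top_block_mem_blocks:
  assumes "A @ B \<in> adm N m" "set A = {y..N}" "y \<le> N" "y = N \<or> precedes A y N"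
  shows "map (\<lambda>x. x - (y - 1)) A \<in> blocks (length A)"
proof -
  define T where "T = map (\<lambda>x. x - (y - 1)) A"
  have T_adm: "T \<in> adm (length A) (length A)"
    unfolding T_def using assms(1-3) by (rule adm_top_block)
  have "distinct A" "1 \<le> y"
    using assms(1,2,3) unfolding adm_def by auto
  then have len_A: "length A = N - (y - 1)"
    using assms(2) distinct_card[of A] by simp
  have "precedes T 1 (length A) \<or> length A = 1"
    using assms(4)
  proof
    assume "precedes A y N"
    then have "precedes T (y - (y - 1)) (N - (y - 1))"
      unfolding T_def by (rule precedes_map)
    then show ?thesis
      using \<open>1 \<le> y\<close> len_A by simp
  qed (use len_A \<open>1 \<le> y\<close> in simp)
  moreover have "distinct T"
    using T_adm unfolding adm_def by simp
  ultimately have "\<not> precedes T (length A) 1"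
    using distinct_precedes_asym[of T 1 "length A"] distinct_precedes_asym[of T 1 1] by auto
  then show ?thesis
    using T_adm unfolding blocks_def T_def by simp
qed

lemma adm_append_below:
  assumes "A @ B \<in> adm N m" "set A = {y..N}" "y \<le> N" "2 \<le> y" "\<forall>x \<in> set B. x < y"
  shows "B \<in> adm (y - 1) (length B)"
proof -
  have P: "distinct (A @ B)" "set (A @ B) \<subseteq> {1..N}" "1 \<in> set (A @ B)"
    "avoids_1423_2413 (A @ B)"
    and gaps: "\<And>g. g \<in> {1..N} - set (A @ B) \<Longrightarrow> \<not> straddles (A @ B) g"
    using assms(1) unfolding adm_def by auto
  have "set B \<subseteq> {1..y - 1}"
    using P(2) assms(5) by fastforce
  moreover have "1 \<in> set B"
    using P(3) assms(2,4) by auto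
  moreover have "\<not> straddles B g" if "g \<in> {1..y - 1} - set B" for g
  proof -
    have "g \<in> {1..N} - set (A @ B)"
      using that assms(2,3) by auto
    then show ?thesis
      using gaps straddles_appendI2 by blast
  qed
  ultimately show ?thesis
    using P(1,4) avoids_1423_2413_appendD(2) unfolding adm_def by auto
qed

lemma adm_mem_between:
  assumes "A @ B \<in> adm N m" "precedes A y N" "1 \<in> set B" "y < g" "g < N"
  shows "g \<in> set (A @ B)"
proof (rule ccontr)
  assume "g \<notin> set (A @ B)"
  then have "g \<noteq> 1"
    using assms(3) by auto
  then have "1 < g"
    using assms(4) by simp
  then have "g \<in> {1..N} - set (A @ B)"
    using \<open>g \<notin> set (A @ B)\<close> assms(5) by simp
  moreover have "straddles (A @ B) g"
    using straddles_append_precedes[OF assms(2,3), of g] assms(4,5) \<open>1 < g\<close> by simp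
  ultimately show False
    using assms(1) unfolding adm_def by blast
qed

lemma adm_N1_top_values_first:
  assumes "P \<in> adm_N1 N m"
  obtains y where "2 \<le> y" "y \<le> N" "set (takeWhile (\<lambda>x. y \<le> x) P) = {y..N}"
    "\<forall>x \<in> set (dropWhile (\<lambda>x. y \<le> x) P). x < y"
    "y = N \<or> precedes (takeWhile (\<lambda>x. y \<le> x) P) y N"
proof -
  have P_adm: "P \<in> adm N m" and "precedes P N 1"
    using assms unfolding adm_N1_def by simp_all
  then have P: "distinct P" "set P \<subseteq> {1..N}" "1 \<in> set P" "avoids_1423_2413 P"
    unfolding adm_def by simp_all
  obtain j i where ji: "j < i" "i < length P" "P ! j = N" "P ! i = 1"
    using \<open>precedes P N 1\<close> unfolding precedes_def by blast
  define y where "y = Min (set (take (Suc j) P))"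
  define A B where "A = takeWhile (\<lambda>x. y \<le> x) P" and "B = dropWhile (\<lambda>x. y \<le> x) P"
  have P_eq: "P = A @ B"
    unfolding A_def B_def by simp
  have A_ge: "y \<le> x" if "x \<in> set A" for x
    using that unfolding A_def by (auto dest: set_takeWhileD)
  have y_take: "y \<in> set (take (Suc j) P)" and "N \<in> set A" and y_N: "y = N \<or> precedes A y N"
    using Min_prefix_takeWhile[of j P] ji unfolding y_def[symmetric] A_def by auto
  have "y \<in> set P"
    using y_take by (rule in_set_takeD)
  have "drop (Suc j) P ! (i - Suc j) = 1" "i - Suc j < length (drop (Suc j) P)"
    using ji by simp_all
  then have "1 \<in> set (drop (Suc j) P)"
    by (metis nth_mem)
  then have "y \<noteq> 1"
    using y_take set_take_disj_set_drop_if_distinct[OF P(1), of "Suc j" "Suc j"] by auto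
  moreover have "1 \<le> y" "y \<le> N"
    using \<open>y \<in> set P\<close> P(2) by auto
  ultimately have "2 \<le> y" "y \<le> N"
    by simp_all
  have below: "\<forall>x \<in> set B. x < y"
    using y_N \<open>N \<in> set A\<close> P(1,2,4) unfolding A_def B_def
    by (intro avoids_1423_2413_dropWhile_below[where z = N]) auto
  have "1 \<in> set B"
    using P(3) \<open>2 \<le> y\<close> A_ge[of 1] unfolding P_eq by auto
  \<comment> \<open>A missing value between \<open>y\<close> and \<open>N\<close> would be straddled by \<open>y\<close>, \<open>N\<close> and the later 1.\<close>
  then have "g \<in> set P" if "g \<in> {y..N}" for g
    using that y_N \<open>y \<in> set P\<close> \<open>N \<in> set A\<close> adm_mem_between[of A B N m y g] P_adm
    unfolding P_eq by (cases "g = y \<or> g = N") auto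
  then have "set A = {y..N}"
    using below P(2) A_ge unfolding P_eq by fastforce
  then show ?thesis
    using that \<open>2 \<le> y\<close> \<open>y \<le> N\<close> below y_N unfolding A_def B_def by blast
qed

lemma adm_N1_decomp:
  assumes "P \<in> adm_N1 N m"
  obtains t T R where "t \<in> {1..m - 1}" "T \<in> blocks t" "R \<in> adm (N - t) (m - t)"
    "P = map (\<lambda>x. x + (N - t)) T @ R"
proof -
  obtain y where y: "2 \<le> y" "y \<le> N" "set (takeWhile (\<lambda>x. y \<le> x) P) = {y..N}"
    "\<forall>x \<in> set (dropWhile (\<lambda>x. y \<le> x) P). x < y"
    "y = N \<or> precedes (takeWhile (\<lambda>x. y \<le> x) P) y N"
    using adm_N1_top_values_first[OF assms] by blast
  define A B where "A = takeWhile (\<lambda>x. y \<le> x) P" and "B = dropWhile (\<lambda>x. y \<le> x) P"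
  define t where "t = length A"
  have P_eq: "P = A @ B"
    unfolding A_def B_def by simp
  have P_adm: "A @ B \<in> adm N m"
    using assms unfolding adm_N1_def P_eq by simp
  have set_A: "set A = {y..N}" and below: "\<forall>x \<in> set B. x < y"
    and y_N: "y = N \<or> precedes A y N"
    using y(3-5) unfolding A_def B_def by simp_all
  have "distinct A"
    using P_adm unfolding adm_def by simp
  then have "t = N + 1 - y"
    unfolding t_def using set_A distinct_card[of A] by simp
  then have N_t: "N - t = y - 1" and "1 \<le> t"
    using y(1,2) by simp_all
  have "B \<in> adm (N - t) (length B)"
    unfolding N_t by (rule adm_append_below[OF P_adm set_A y(2,1) below])
  moreover have "length B = m - t"
    using P_adm unfolding adm_def t_def by auto
  ultimately have R: "B \<in> adm (N - t) (m - t)"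
    by simp
  then have "B \<noteq> []"
    unfolding adm_def by auto
  then have "t < m"
    using \<open>length B = m - t\<close> by (metis diff_is_0_eq length_0_conv not_le)
  have A_eq: "A = map (\<lambda>x. x + (N - t)) (map (\<lambda>x. x - (y - 1)) A)"
    unfolding N_t map_map o_def using set_A y(1) by (intro map_idI[symmetric]) auto
  show thesis
  proof (rule that)
    show "t \<in> {1..m - 1}"
      using \<open>1 \<le> t\<close> \<open>t < m\<close> by simp
    show "map (\<lambda>x. x - (y - 1)) A \<in> blocks t"
      unfolding t_def using P_adm set_A y(2) y_N by (rule top_block_mem_blocks)
    show "P = map (\<lambda>x. x + (N - t)) (map (\<lambda>x. x - (y - 1)) A) @ B"
      unfolding P_eq by (subst A_eq[symmetric]) (rule refl)
  qed (fact R)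
qed

lemma adm_N1_decomp_unique:
  assumes "T \<in> blocks t" "R \<in> adm (N - t) (m - t)" "T' \<in> blocks t'" "R' \<in> adm (N - t') (m - t')"
    "1 \<le> t'" "map (\<lambda>x. x + (N - t)) T @ R = map (\<lambda>x. x + (N - t')) T' @ R'"
  shows "t \<le> t'"
proof (rule ccontr)
  assume "\<not> t \<le> t'"
  define S S' where "S = map (\<lambda>x. x + (N - t)) T" and "S' = map (\<lambda>x. x + (N - t')) T'"
  have T: "T \<in> adm t t" "\<not> precedes T t 1" and T': "T' \<in> adm t' t'"
    using assms(1,3) unfolding blocks_def by simp_all
  have set_T: "set T = {1..t}" and set_T': "set T' = {1..t'}"
    using T(1) T' by (simp_all add: adm_full)
  have "length S = t" "length S' = t'" "distinct S"
    using T(1) T' unfolding S_def S'_def adm_def by (auto simp: distinct_map inj_on_def)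
  have "1 \<le> N - t" "1 \<le> N - t'"
    using assms(2,4) unfolding adm_def by auto
  have "S @ R = S' @ R'"
    using assms(6) unfolding S_def S'_def .
  then have "take t (S @ R) = take t (S' @ R')"
    by simp
  then have "S = take t (S' @ R')"
    using \<open>length S = t\<close> by simp
  then have S_eq: "S = S' @ take (t - t') R'"
    using \<open>length S' = t'\<close> \<open>\<not> t \<le> t'\<close> by simp
  have "t' + (N - t') \<in> set S'"
    using set_T' assms(5) unfolding S'_def by simp
  then have "N \<in> set S'"
    using \<open>1 \<le> N - t'\<close> by simp
  have "precedes T 1 t"
    using precedes_total[of 1 T t] T(2) set_T assms(5) \<open>\<not> t \<le> t'\<close> by auto
  then have "precedes S (1 + (N - t)) N"
    using precedes_map[of T 1 t "\<lambda>x. x + (N - t)"] \<open>1 \<le> N - t\<close> unfolding S_def by simp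
  then have prec: "precedes (S' @ take (t - t') R') (1 + (N - t)) N"
    unfolding S_eq .
  have dist: "distinct (S' @ take (t - t') R')"
    using \<open>distinct S\<close> unfolding S_eq .
  have "1 + (N - t) \<in> set S'"
    by (rule distinct_precedes_appendD[OF dist prec \<open>N \<in> set S'\<close>])
  then show False
    using set_T' \<open>\<not> t \<le> t'\<close> \<open>1 \<le> N - t\<close> unfolding S'_def by auto
qed

lemma card_adm_N1:
  "card (adm_N1 N m) = (\<Sum>t = 1..m - 1. card (blocks t) * card (adm (N - t) (m - t)))"
proof -
  define D where "D = (SIGMA t:{1..m - 1}. blocks t \<times> adm (N - t) (m - t))"
  define f where "f = (\<lambda>(t, T, R). map (\<lambda>x. x + (N - t)) T @ R)"
  have "adm_N1 N m = f ` D"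
  proof (intro equalityI subsetI)
    fix P assume "P \<in> adm_N1 N m"
    then obtain t T R where "t \<in> {1..m - 1}" "T \<in> blocks t" "R \<in> adm (N - t) (m - t)"
      "P = map (\<lambda>x. x + (N - t)) T @ R"
      by (rule adm_N1_decomp)
    then show "P \<in> f ` D"
      unfolding D_def f_def by (intro image_eqI[of _ _ "(t, T, R)"]) simp_all
  next
    fix P assume "P \<in> f ` D"
    then show "P \<in> adm_N1 N m"
      unfolding D_def f_def using adm_N1_compose by auto
  qed
  moreover have "inj_on f D"
  proof (rule inj_onI)
    fix x x' assume mem: "x \<in> D" "x' \<in> D" and eq: "f x = f x'"
    obtain t T R t' T' R' where x: "x = (t, T, R)" and x': "x' = (t', T', R')"
      by (cases x, cases x') auto
    have "t \<le> t'" "t' \<le> t"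
      using mem eq unfolding x x' D_def f_def by (auto intro: adm_N1_decomp_unique)
    then have "t' = t"
      by simp
    moreover have "length T = t" "length T' = t'"
      using mem unfolding x x' D_def blocks_def adm_def by auto
    ultimately show "x = x'"
      using eq unfolding x x' f_def by (auto simp: append_eq_append_conv inj_map_eq_map inj_def)
  qed
  moreover have "card D = (\<Sum>t = 1..m - 1. card (blocks t) * card (adm (N - t) (m - t)))"
    unfolding D_def using finite_adm
    by (subst card_SigmaI) (auto simp: blocks_def card_cartesian_product)
  ultimately show ?thesis
    by (simp add: card_image)
qed

section \<open>The recurrence\<close>

(* Interpreted below with F, H, G counting adm, adm_1N, adm_N1, and b counting blocks. *)
locale split_recurrence =
  fixes F H G :: "nat \<Rightarrow> nat \<Rightarrow> nat" and b :: "nat \<Rightarrow> nat"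
  assumes G_eq: "G N m = (\<Sum>t = 1..m - 1. b t * F (N - t) (m - t))"
    and F_zero: "N < m \<Longrightarrow> F N m = 0"
    and F_one: "1 \<le> N \<Longrightarrow> F N 1 = 1"
    and F_split: "2 \<le> N \<Longrightarrow> F N m = F (N - 1) m + H N m + G N m"
    and F_diag: "F t t = b t + G t t"
    and H_one: "H N 1 = 0"
    and H_Suc: "2 \<le> N \<Longrightarrow> m < N \<Longrightarrow> H N (Suc m) = F (N - 1) m + H N m"
begin

lemma F_rec_if_G_eq_H:
  assumes "\<And>m. 1 \<le> m \<Longrightarrow> m \<le> N \<Longrightarrow> G N m = H N m" "2 \<le> m" "m \<le> N"
  shows "F N m = F N (m - 1) + F (N - 1) m + F (N - 1) (m - 1)"
proof -
  have "H N m = F (N - 1) (m - 1) + H N (m - 1)"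
    using H_Suc[of N "m - 1"] assms(2,3) by simp
  moreover have "F N m = F (N - 1) m + H N m + G N m"
    "F N (m - 1) = F (N - 1) (m - 1) + H N (m - 1) + G N (m - 1)"
    using F_split assms(2,3) by simp_all
  moreover have "G N m = H N m" "G N (m - 1) = H N (m - 1)"
    using assms by simp_all
  ultimately show ?thesis
    by simp
qed

lemma G_Suc_Suc:
  "G N (Suc (Suc k)) =
     (\<Sum>t = 1..k. b t * F (N - t) (Suc (Suc k) - t)) + b (Suc k) * F (N - Suc k) 1"
  unfolding G_eq by (simp add: Suc_diff_le)

lemma G_shift:
  assumes "Suc (Suc k) \<le> N"
    and rec: "\<And>t. t \<in> {1..k} \<Longrightarrow> F (N - t) (Suc (Suc k) - t) =
      F (N - t) (Suc k - t) + F (N - 1 - t) (Suc (Suc k) - t) + F (N - 1 - t) (Suc k - t)"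
  shows "G N (Suc (Suc k)) + b (Suc k) * F (N - Suc (Suc k)) 1 =
    b (Suc k) + G N (Suc k) + G (N - 1) (Suc (Suc k)) + G (N - 1) (Suc k)"
proof -
  have "(\<Sum>t = 1..k. b t * F (N - t) (Suc (Suc k) - t)) =
      (\<Sum>t = 1..k. b t * F (N - t) (Suc k - t)) + (\<Sum>t = 1..k. b t * F (N - 1 - t) (Suc (Suc k) - t)) +
      (\<Sum>t = 1..k. b t * F (N - 1 - t) (Suc k - t))"
    using rec by (simp add: sum.distrib algebra_simps)
  moreover have "G N (Suc k) = (\<Sum>t = 1..k. b t * F (N - t) (Suc k - t))"
    "G (N - 1) (Suc k) = (\<Sum>t = 1..k. b t * F (N - 1 - t) (Suc k - t))"
    unfolding G_eq by simp_all
  moreover have "F (N - Suc k) 1 = 1"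
    using assms(1) by (intro F_one) simp
  moreover have "N - 1 - Suc k = N - Suc (Suc k)"
    by simp
  ultimately show ?thesis
    unfolding G_Suc_Suc by (simp add: diff_commute[of N 1])
qed

lemma G_step:
  assumes F_rec_below: "\<And>N' m'. N' < N \<Longrightarrow> 2 \<le> m' \<Longrightarrow> m' \<le> N' \<Longrightarrow>
      F N' m' = F N' (m' - 1) + F (N' - 1) m' + F (N' - 1) (m' - 1)"
    and G_eq_H_pred: "\<And>m. 1 \<le> m \<Longrightarrow> m \<le> N - 1 \<Longrightarrow> G (N - 1) m = H (N - 1) m"
    and k: "Suc (Suc k) \<le> N"
  shows "G N (Suc (Suc k)) = F (N - 1) (Suc k) + G N (Suc k)"
proof -
  have "F (N - t) (Suc (Suc k) - t) =
      F (N - t) (Suc k - t) + F (N - 1 - t) (Suc (Suc k) - t) + F (N - 1 - t) (Suc k - t)"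
    if "t \<in> {1..k}" for t
  proof -
    have "F (N - t) (Suc (Suc k) - t) = F (N - t) (Suc (Suc k) - t - 1) +
        F (N - t - 1) (Suc (Suc k) - t) + F (N - t - 1) (Suc (Suc k) - t - 1)"
      using that k by (intro F_rec_below) auto
    moreover have "Suc (Suc k) - t - 1 = Suc k - t" "N - t - 1 = N - 1 - t"
      by simp_all
    ultimately show ?thesis
      by simp
  qed
  then have shift: "G N (Suc (Suc k)) + b (Suc k) * F (N - Suc (Suc k)) 1 =
      b (Suc k) + G N (Suc k) + G (N - 1) (Suc (Suc k)) + G (N - 1) (Suc k)"
    by (rule G_shift[OF k])
  show ?thesis
  proof (cases "Suc (Suc k) < N")
    case True
    have "G (N - 1) (Suc (Suc k)) = H (N - 1) (Suc (Suc k))" "G (N - 1) (Suc k) = H (N - 1) (Suc k)"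
      using G_eq_H_pred True by simp_all
    moreover have "H (N - 1) (Suc (Suc k)) = F (N - 1 - 1) (Suc k) + H (N - 1) (Suc k)"
      using True by (intro H_Suc) auto
    moreover have "F (N - 1) (Suc k) = F (N - 1 - 1) (Suc k) + H (N - 1) (Suc k) + G (N - 1) (Suc k)"
      using True by (intro F_split) auto
    moreover have "F (N - Suc (Suc k)) 1 = 1"
      using True by (intro F_one) simp
    ultimately show ?thesis
      using shift by simp
  next
    case False
    then have N: "N = Suc (Suc k)"
      using k by simp
    have "G (N - 1) N = 0"
      unfolding G_eq by (auto intro!: sum.neutral F_zero)
    moreover have "F (N - 1) (N - 1) = b (N - 1) + G (N - 1) (N - 1)"
      by (rule F_diag)
    ultimately show ?thesis
      using shift F_zero[of 0 1] unfolding N by simp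
  qed
qed

lemma G_eq_H: "1 \<le> m \<Longrightarrow> m \<le> N \<Longrightarrow> G N m = H N m"
proof (induction N arbitrary: m rule: less_induct)
  case (less N)
  have step: "G N (Suc (Suc k)) = F (N - 1) (Suc k) + G N (Suc k)" if "Suc (Suc k) \<le> N" for k
  proof (rule G_step[OF _ _ that])
    show "F N' m' = F N' (m' - 1) + F (N' - 1) m' + F (N' - 1) (m' - 1)"
      if "N' < N" "2 \<le> m'" "m' \<le> N'" for N' m'
      using F_rec_if_G_eq_H[OF less.IH[OF that(1)]] that(2,3) by blast
    show "G (N - 1) m = H (N - 1) m" if "1 \<le> m" "m \<le> N - 1" for m
      using less.IH[of "N - 1" m] that \<open>Suc (Suc k) \<le> N\<close> by simp
  qed
  show ?case
    using less.prems
  proof (induction m rule: nat_induct_at_least)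
    case base
    show ?case
      using H_one by (simp add: G_eq)
  next
    case (Suc k)
    then obtain j where k: "k = Suc j"
      by (cases k) auto
    have "G N (Suc k) = F (N - 1) k + G N k"
      using step[of j] Suc.prems unfolding k by simp
    also have "\<dots> = F (N - 1) k + H N k"
      using Suc by simp
    also have "\<dots> = H N (Suc k)"
      using H_Suc[of N k] Suc.prems Suc.hyps by simp
    finally show ?case .
  qed
qed

theorem F_rec:
  assumes "2 \<le> m" "m \<le> N"
  shows "F N m = F N (m - 1) + F (N - 1) m + F (N - 1) (m - 1)"
  using F_rec_if_G_eq_H[OF G_eq_H] assms by blast

end

lemma card_adm_diag: "card (adm t t) = card (blocks t) + card (adm_N1 t t)"
proof -
  have "adm t t = blocks t \<union> adm_N1 t t" "blocks t \<inter> adm_N1 t t = {}"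
    unfolding blocks_def adm_N1_def by auto
  moreover have "finite (blocks t)" "finite (adm_N1 t t)"
    using finite_adm unfolding blocks_def adm_N1_def by simp_all
  ultimately show ?thesis
    by (simp add: card_Un_disjoint)
qed

lemma adm_1N_one: "adm_1N N 1 = {}"
  unfolding adm_1N_def adm_def precedes_def by auto

interpretation adm_counts: split_recurrence
  "\<lambda>N m. card (adm N m)" "\<lambda>N m. card (adm_1N N m)" "\<lambda>N m. card (adm_N1 N m)" "\<lambda>t. card (blocks t)"
proof
  show "card (adm_N1 N m) = (\<Sum>t = 1..m - 1. card (blocks t) * card (adm (N - t) (m - t)))" for N m
    by (rule card_adm_N1)
  show "card (adm N m) = 0" if "N < m" for N m
    using that by (simp add: adm_eq_empty)
  show "card (adm N 1) = 1" if "1 \<le> N" for N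
    using adm_one[OF that] by simp
  show "card (adm N m) = card (adm (N - 1) m) + card (adm_1N N m) + card (adm_N1 N m)"
    if "2 \<le> N" for N m
    using that by (rule card_adm_split)
  show "card (adm t t) = card (blocks t) + card (adm_N1 t t)" for t
    by (rule card_adm_diag)
  show "card (adm_1N N 1) = 0" for N
    using adm_1N_one[of N] by simp
  show "card (adm_1N N (Suc m)) = card (adm (N - 1) m) + card (adm_1N N m)"
    if "2 \<le> N" "m < N" for N m
    using that by (rule card_adm_1N_Suc)
qed

theorem proposition4p1:
  shows "(\<forall>n\<ge>2. a_num n 2 = 1) \<and>
         (\<forall>n\<ge>3. a_num n n = a_num n (n - 1) + a_num (n - 1) (n - 1)) \<and>
         (\<forall>n k. 3 \<le> k \<and> k < n \<longrightarrow>
            a_num n k = a_num n (k - 1) + a_num (n - 1) k + a_num (n - 1) (k - 1))"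
proof (intro conjI allI impI)
  fix n :: nat assume "2 \<le> n"
  then show "a_num n 2 = 1"
    using adm_one[of "n - 1"] by (simp add: a_num_eq_card_adm)
next
  fix n :: nat assume n: "3 \<le> n"
  have "card (adm (n - 1) (n - 1)) =
      card (adm (n - 1) (n - 1 - 1)) + card (adm (n - 1 - 1) (n - 1)) +
      card (adm (n - 1 - 1) (n - 1 - 1))"
    using n by (intro adm_counts.F_rec) auto
  moreover have "adm (n - 1 - 1) (n - 1) = {}"
    using n by (intro adm_eq_empty) auto
  moreover have "a_num n n = card (adm (n - 1) (n - 1))"
    "a_num n (n - 1) = card (adm (n - 1) (n - 1 - 1))"
    "a_num (n - 1) (n - 1) = card (adm (n - 1 - 1) (n - 1 - 1))"
    using n by (simp_all add: a_num_eq_card_adm)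
  ultimately show "a_num n n = a_num n (n - 1) + a_num (n - 1) (n - 1)"
    by simp
next
  fix n k :: nat assume "3 \<le> k \<and> k < n"
  then have nk: "3 \<le> k" "k < n"
    by simp_all
  have "card (adm (n - 1) (k - 1)) =
      card (adm (n - 1) (k - 1 - 1)) + card (adm (n - 1 - 1) (k - 1)) +
      card (adm (n - 1 - 1) (k - 1 - 1))"
    using nk by (intro adm_counts.F_rec) auto
  moreover have "a_num n k = card (adm (n - 1) (k - 1))"
    "a_num n (k - 1) = card (adm (n - 1) (k - 1 - 1))"
    "a_num (n - 1) k = card (adm (n - 1 - 1) (k - 1))"
    "a_num (n - 1) (k - 1) = card (adm (n - 1 - 1) (k - 1 - 1))"
    using nk by (simp_all add: a_num_eq_card_adm)
  ultimately show "a_num n k = a_num n (k - 1) + a_num (n - 1) k + a_num (n - 1) (k - 1)"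
    by simp
qed

end
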